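(* Let $k\ge 2$ and let $H$ be a hypergraph on vertex set $V$ with $R(H)=\{1,k\}$ whose $1$-edges are exactly all singletons $\{v\}$, $v\in V$, and let $H^k$ denote the $k$-uniform hypergraph of $k$-edges of $H$. Then \[\pi(H)=\begin{cases}1+\pi(H^k) & \text{if } \pi(H^k)\ge 1-\frac1k,\\[2pt] 1+\left(\frac{1}{k(1-\pi(H^k))}\right)^{1/(k-1)}\left(1-\frac1k\right) & \text{otherwise.}\end{cases}\]
   Context: A hypergraph $H=(V,E)$ has finite vertex set $V$ and edge set $E\subseteq 2^V$; $R(H)=\{|F|:F\in E\}$. $H_1\subseteq H_2$ means there is an injective $f\colon V(H_1)\to V(H_2)$ with $f(F)\in E(H_2)$ for all $F\in E(H_1)$. For $G$ on $n$ vertices, $h_n(G)=\sum_{F\in E(G)}1/\binom{n}{|F|}$; $\pi_n(H)=\max\{h_n(G): G\text{ on } n \text{ vertices}, R(G)\subseteq R(H), H\not\subseteq G\}$ and $\pi(H)=\lim_n\pi_n(H)$. For a $k$-uniform hypergraph this $\pi$ is the usual Turán density $\lim_n \mathrm{ex}(n,H^k)/\binom nk$. *)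

theory Defs
  imports Complex_Main
begin

type_synonym 'a hypergraph = "'a set \<times> 'a set set"

definition hypergraph :: "'a hypergraph \<Rightarrow> bool" where
  "hypergraph H \<longleftrightarrow> finite (fst H) \<and> snd H \<subseteq> Pow (fst H)"

definition Rset :: "'a hypergraph \<Rightarrow> nat set" where
  "Rset H = card ` snd H"

definition hsub :: "'a hypergraph \<Rightarrow> 'b hypergraph \<Rightarrow> bool" where
  "hsub H1 H2 \<longleftrightarrow> (\<exists>f. inj_on f (fst H1) \<and> f ` fst H1 \<subseteq> fst H2 \<and>
                        (\<forall>F\<in>snd H1. f ` F \<in> snd H2))"

definition lubell :: "nat \<Rightarrow> nat set set \<Rightarrow> real" where
  "lubell n E = (\<Sum>F\<in>E. 1 / real (n choose card F))"

definition pi_n :: "'a hypergraph \<Rightarrow> nat \<Rightarrow> real" where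
  "pi_n H n = Max {lubell n E | E. E \<subseteq> Pow {0..<n} \<and> Rset ({0..<n}, E) \<subseteq> Rset H
                                   \<and> \<not> hsub H ({0..<n}, E)}"

definition pi_dens :: "'a hypergraph \<Rightarrow> real" where
  "pi_dens H = lim (pi_n H)"

definition kpart :: "nat \<Rightarrow> 'a hypergraph \<Rightarrow> 'a hypergraph" where
  "kpart k H = (fst H, {F \<in> snd H. card F = k})"

end

theory Submission
  imports Defs
begin

text \<open>Take an extremal \<open>H\<close>-free family on \<open>n\<close> vertices and let \<open>S\<close> be the set of \<open>s\<close> vertices
  carrying a singleton edge. Since every vertex of \<open>H\<close> carries a singleton edge, a copy of \<open>H\<close>
  is the same as a copy of \<open>H\<^sup>k\<close> among the \<open>k\<close>-edges inside \<open>S\<close>, while \<open>k\<close>-edges leaving \<open>S\<close>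
  are harmless. Hence \<open>\<pi>\<^sub>n(H)\<close> is the maximum over \<open>s\<close> of
  \<open>s/n + 1 - (1 - \<pi>\<^sub>s(H\<^sup>k)) C(s,k)/C(n,k)\<close>, attained by an extremal \<open>H\<^sup>k\<close>-free family in \<open>S\<close>
  plus all \<open>k\<close>-sets leaving \<open>S\<close>. With \<open>s/n \<rightarrow> x\<close> this tends to the maximum of
  \<open>1 + x - (1 - \<pi>(H\<^sup>k)) x\<^sup>k\<close> over \<open>[0, 1]\<close>, which is the stated closed form.\<close>

lemma power_ge_tangent_line:
  fixes a x :: real
  assumes "a > 0" "x \<ge> 0"
  shows "a^k + real k * a^(k-1) * (x - a) \<le> x^k"
proof (cases k)
  case 0 then show ?thesis by simp
next
  case (Suc m)
  have "-1 \<le> x/a - 1" using assms by simp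
  from Bernoulli_inequality[OF this, of k]
  have "a^k * (1 + real k * (x/a - 1)) \<le> a^k * (x/a)^k"
    using assms by (intro mult_left_mono) auto
  also have "a^k * (x/a)^k = x^k" using assms by (simp add: power_divide)
  also have "a^k * (1 + real k * (x/a - 1)) = a^k + real k * a^(k-1) * (x - a)"
    using assms Suc by (simp add: field_simps)
  finally show ?thesis .
qed

lemma power_diff_le_unit_interval:
  fixes a b :: real
  assumes "0 \<le> b" "b \<le> a" "a \<le> 1"
  shows "a^k - b^k \<le> real k * (a - b)"
proof (cases "a = 0")
  case True then show ?thesis using assms by auto
next
  case False
  with assms have "a^k + real k * a^(k-1) * (b - a) \<le> b^k"
    by (intro power_ge_tangent_line) auto
  moreover have "real k * (a - b) * a^(k-1) \<le> real k * (a - b)"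
    using assms by (intro mult_left_le) (auto simp: power_le_one)
  ultimately show ?thesis by (simp add: algebra_simps)
qed

text \<open>A critical point of \<open>x - c x\<^sup>k\<close> (or a right endpoint where it still increases) is a maximum.\<close>
lemma diff_power_le_at_critical:
  fixes c x x0 :: real
  assumes "c \<ge> 0" "x0 > 0" "x \<ge> 0" "(x - x0) * (1 - c * real k * x0^(k-1)) \<le> 0"
  shows "x - c * x^k \<le> x0 - c * x0^k"
proof -
  have "c * (x0^k + real k * x0^(k-1) * (x - x0)) \<le> c * x^k"
    using assms power_ge_tangent_line[of x0 x k] by (intro mult_left_mono) auto
  then show ?thesis using assms(4) by (simp add: algebra_simps)
qed

lemma binomial_ratio_eq_prod:
  assumes "k \<le> s" "s \<le> n"
  shows "real (s choose k) / real (n choose k) = (\<Prod>i = 0..<k. real (s - i) / real (n - i))"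
proof -
  have "real (s choose k) / real (n choose k) =
      (\<Prod>i = 0..<k. real (s - i) / real (k - i)) / (\<Prod>i = 0..<k. real (n - i) / real (k - i))"
    using assms by (simp add: binomial_altdef_of_nat)
  also have "\<dots> = (\<Prod>i = 0..<k. (real (s - i) / real (k - i)) / (real (n - i) / real (k - i)))"
    by (simp add: prod_dividef)
  also have "\<dots> = (\<Prod>i = 0..<k. real (s - i) / real (n - i))"
    by (intro prod.cong) auto
  finally show ?thesis .
qed

lemma binomial_ratio_le_power:
  assumes "s \<le> n" "k \<le> n" "k \<ge> 1"
  shows "real (s choose k) / real (n choose k) \<le> (real s / real n)^k"
proof (cases "k \<le> s")
  case True
  have "(\<Prod>i = 0..<k. real (s - i) / real (n - i)) \<le> (\<Prod>i = 0..<k. real s / real n)"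
  proof (intro prod_mono conjI)
    fix i assume i: "i \<in> {0..<k}"
    have "real (s - i) * real n \<le> real s * real (n - i)"
      using i True assms by (simp add: of_nat_diff algebra_simps mult_left_mono)
    then show "real (s - i) / real (n - i) \<le> real s / real n"
      using i assms by (simp add: divide_simps)
  qed simp
  then show ?thesis using binomial_ratio_eq_prod[OF True assms(1)] by simp
next
  case False then show ?thesis using assms by (simp add: binomial_eq_0)
qed

lemma power_le_binomial_ratio:
  assumes "s \<le> n" "k \<le> n" "k \<ge> 1"
  shows "(real s / real n)^k - real k * real k / real n \<le> real (s choose k) / real (n choose k)"
proof (cases "k \<le> s")
  case True
  define y where "y = (real s - real k) / real n"
  have y: "0 \<le> y" "y \<le> real s / real n" "real s / real n - y = real k / real n"
    using True assms by (auto simp: y_def divide_simps)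
  have "(\<Prod>i = 0..<k. y) \<le> (\<Prod>i = 0..<k. real (s - i) / real (n - i))"
  proof (intro prod_mono conjI)
    fix i assume i: "i \<in> {0..<k}"
    have "(real s - real k) * real (n - i) \<le> (real s - real k) * real n"
      using True by (intro mult_left_mono) auto
    also have "\<dots> \<le> real (s - i) * real n"
      using i True by (intro mult_right_mono) (auto simp: of_nat_diff)
    finally show "y \<le> real (s - i) / real (n - i)"
      using i assms by (simp add: y_def divide_simps)
  qed (use y in simp)
  moreover have "(real s / real n)^k - y^k \<le> real k * (real k / real n)"
    using power_diff_le_unit_interval[of y "real s / real n" k] y assms by simp
  ultimately show ?thesis using binomial_ratio_eq_prod[OF True assms(1)] by simp
next
  case False
  have "(real s / real n)^k \<le> real s / real n"
    using assms by (simp add: power_le_one power_decreasing[of 1 k, simplified])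
  also have "\<dots> \<le> real k * real k / real n"
    using False assms by (intro divide_right_mono) (auto intro: order.trans[of _ "real k"])
  finally show ?thesis using False by (simp add: binomial_eq_0)
qed

section \<open>The limiting optimisation problem\<close>

definition extension_density :: "nat \<Rightarrow> real \<Rightarrow> real" where
  "extension_density k p = (if p \<ge> 1 - 1 / real k
     then 1 + p
     else 1 + (1 / (real k * (1 - p))) powr (1 / (real k - 1)) * (1 - 1 / real k))"

text \<open>\<open>extension_density k p\<close> is the maximum of \<open>1 + x - (1 - p) x\<^sup>k\<close> over \<open>[0, 1]\<close>; it is attained
  at \<open>x = 1\<close> if \<open>k (1 - p) \<le> 1\<close> and at the critical point \<open>(k (1 - p)) powr (-1 / (k - 1))\<close> otherwise.\<close>
lemma extension_density_maximizer:
  fixes p :: real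
  assumes k: "k \<ge> 2" and p: "p \<le> 1"
  obtains x0 where "0 < x0" "x0 \<le> 1" "1 + x0 - (1 - p) * x0^k = extension_density k p"
    "\<And>x. 0 \<le> x \<Longrightarrow> x \<le> 1 \<Longrightarrow> 1 + x - (1 - p) * x^k \<le> extension_density k p"
proof (cases "p \<ge> 1 - 1 / real k")
  case True
  then have "(1 - p) * real k \<le> 1" using k by (simp add: field_simps)
  then have "x - (1 - p) * x^k \<le> 1 - (1 - p) * 1^k" if "0 \<le> x" "x \<le> 1" for x
    using that p by (intro diff_power_le_at_critical) (auto intro: mult_nonpos_nonneg)
  with True show ?thesis by (intro that[of 1]) (auto simp: extension_density_def)
next
  case False
  define c where "c = 1 - p"
  have ck: "c * real k > 1" using False k unfolding c_def by (simp add: field_simps)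
  define y where "y = 1 / (real k * c)"
  have y: "0 < y" "y < 1" using ck by (auto simp: y_def field_simps)
  define x0 where "x0 = y powr (1 / (real k - 1))"
  have x0: "x0 > 0" using y by (simp add: x0_def)
  have "x0^(k-1) = y powr (1 / (real k - 1) * real (k - 1))"
    using x0 by (simp add: powr_realpow[symmetric] powr_powr x0_def)
  also have "1 / (real k - 1) * real (k - 1) = 1" using k by (simp add: of_nat_diff)
  finally have x0_pow: "x0^(k-1) = y" using y by simp
  have "x0 < 1"
    using x0_pow y by (intro power_less_imp_less_base[of x0 "k-1"]) auto
  have critical: "c * real k * x0^(k-1) = 1" using x0_pow ck k unfolding y_def by auto
  have "x0^k = x0 * x0^(k-1)" using k by (simp flip: power_Suc)
  then have "c * x0^k = x0 / real k" using critical k by (simp add: field_simps)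
  then have "1 + x0 - c * x0^k = extension_density k p"
    using False unfolding extension_density_def c_def[symmetric] y_def[symmetric] x0_def[symmetric]
    by (simp add: algebra_simps)
  moreover have "1 + x - c * x^k \<le> 1 + x0 - c * x0^k" if "0 \<le> x" for x
    using diff_power_le_at_critical[of c x0 x k] that x0 p critical by (simp add: c_def)
  ultimately show ?thesis
    using x0 \<open>x0 < 1\<close> unfolding c_def by (intro that[of x0]) auto
qed

text \<open>The Lubell value, on \<open>n\<close> vertices, of the family consisting of the singletons of an \<open>s\<close>-set \<open>S\<close>,
  a \<open>t\<close>-fraction of the \<open>k\<close>-subsets of \<open>S\<close>, and all \<open>k\<close>-sets not contained in \<open>S\<close>.\<close>
definition construction_value :: "nat \<Rightarrow> real \<Rightarrow> nat \<Rightarrow> nat \<Rightarrow> real" where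
  "construction_value k t s n = real s / real n + 1 - (1 - t) * (real (s choose k) / real (n choose k))"

lemma construction_value_ge:
  assumes "s \<le> n" "k \<le> n" "k \<ge> 1" "t \<le> 1"
  shows "1 + real s / real n - (1 - t) * (real s / real n)^k \<le> construction_value k t s n"
  using mult_left_mono[OF binomial_ratio_le_power[OF assms(1-3)], of "1 - t"] assms(4)
  unfolding construction_value_def by simp

lemma construction_value_le:
  assumes "s \<le> n" "k \<le> n" "k \<ge> 1" "0 \<le> t" "t \<le> 1"
  shows "construction_value k t s n \<le> 1 + real s / real n - (1 - t) * (real s / real n)^k
           + real k * real k / real n"
proof -
  have "(1 - t) * ((real s / real n)^k - real k * real k / real n)
          \<le> (1 - t) * (real (s choose k) / real (n choose k))"
    using assms by (intro mult_left_mono power_le_binomial_ratio) auto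
  moreover have "(1 - t) * (real k * real k / real n) \<le> real k * real k / real n"
    using assms by (intro mult_left_le_one_le) auto
  ultimately show ?thesis unfolding construction_value_def by (simp add: algebra_simps)
qed

lemma construction_value_le_trivial:
  assumes "t \<le> 1"
  shows "construction_value k t s n \<le> 1 + real s / real n"
  using assms unfolding construction_value_def by simp

lemma floor_mult_tendsto:
  fixes x0 :: real
  assumes "x0 > 0"
  shows "filterlim (\<lambda>n. nat \<lfloor>x0 * real n\<rfloor>) at_top sequentially"
    and "(\<lambda>n. real (nat \<lfloor>x0 * real n\<rfloor>) / real n) \<longlonglongrightarrow> x0"
proof -
  have "filterlim (\<lambda>n. x0 * real n) at_top sequentially"
    using assms by (intro filterlim_tendsto_pos_mult_at_top filterlim_real_sequentially) auto
  then show "filterlim (\<lambda>n. nat \<lfloor>x0 * real n\<rfloor>) at_top sequentially"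
    by (intro filterlim_compose[OF filterlim_nat_sequentially]
        filterlim_compose[OF filterlim_floor_sequentially])
  have floor_eq: "real (nat \<lfloor>x0 * real n\<rfloor>) = of_int \<lfloor>x0 * real n\<rfloor>" for n
    using assms by simp
  have floor_bounds: "x0 * real n - 1 \<le> real (nat \<lfloor>x0 * real n\<rfloor>)"
    "real (nat \<lfloor>x0 * real n\<rfloor>) \<le> x0 * real n" for n
    unfolding floor_eq by linarith+
  show "(\<lambda>n. real (nat \<lfloor>x0 * real n\<rfloor>) / real n) \<longlonglongrightarrow> x0"
  proof (rule tendsto_sandwich[of "\<lambda>n. x0 - 1 / real n" _ _ "\<lambda>n. x0"])
    show "\<forall>\<^sub>F n in sequentially. x0 - 1 / real n \<le> real (nat \<lfloor>x0 * real n\<rfloor>) / real n"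
      using eventually_gt_at_top[of 0]
    proof eventually_elim
      case (elim n)
      then have "x0 - 1 / real n = (x0 * real n - 1) / real n" by (simp add: field_simps)
      also have "\<dots> \<le> real (nat \<lfloor>x0 * real n\<rfloor>) / real n"
        using floor_bounds(1) by (rule divide_right_mono) simp
      finally show ?case .
    qed
    show "\<forall>\<^sub>F n in sequentially. real (nat \<lfloor>x0 * real n\<rfloor>) / real n \<le> x0"
      using eventually_gt_at_top[of 0]
      by eventually_elim (use floor_bounds in \<open>simp add: field_simps\<close>)
    show "(\<lambda>n. x0 - 1 / real n) \<longlonglongrightarrow> x0"
      using tendsto_diff[OF tendsto_const lim_const_over_n[of "1::real"]] by simp
  qed simp
qed

lemma eventually_gt_of_construction_lower_bound:
  fixes P T :: "nat \<Rightarrow> real"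
  assumes T: "T \<longlonglongrightarrow> p" "\<And>s. T s \<le> 1" and k: "k \<ge> 1"
    and lower: "\<And>s n. s \<le> n \<Longrightarrow> k \<le> n \<Longrightarrow> construction_value k (T s) s n \<le> P n"
    and x0: "0 < x0" "x0 \<le> 1" and a: "a < 1 + x0 - (1 - p) * x0^k"
  shows "\<forall>\<^sub>F n in sequentially. a < P n"
proof -
  define s where "s n = nat \<lfloor>x0 * real n\<rfloor>" for n
  have s_le: "s n \<le> n" for n
  proof -
    have "x0 * real n \<le> real n" using x0 by (simp add: mult_left_le_one_le)
    then show ?thesis unfolding s_def by linarith
  qed
  define x where "x n = real (s n) / real n" for n
  have "(\<lambda>n. 1 + x n - (1 - T (s n)) * x n ^ k) \<longlonglongrightarrow> 1 + x0 - (1 - p) * x0^k"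
    unfolding x_def s_def
    by (intro tendsto_intros floor_mult_tendsto(2) filterlim_compose[OF T(1)] floor_mult_tendsto(1) x0)
  then have "\<forall>\<^sub>F n in sequentially. a < 1 + x n - (1 - T (s n)) * x n ^ k"
    using a by (rule order_tendstoD)
  then show ?thesis
    using eventually_ge_at_top[of k]
  proof eventually_elim
    case (elim n)
    then show ?case
      using construction_value_ge[OF s_le _ k T(2)] lower[OF s_le] unfolding x_def
      by (meson less_le_trans order.trans)
  qed
qed

text \<open>For the \<open>s\<close> provided by \<open>upper\<close>, either \<open>s\<close> is small, so the value is at most \<open>1 + o(1)\<close>,
  or \<open>T s\<close> is already close to \<open>p\<close>.\<close>
lemma eventually_lt_of_construction_upper_bound:
  fixes P T :: "nat \<Rightarrow> real"
  assumes T: "T \<longlonglongrightarrow> p" "\<And>s. 0 \<le> T s" "\<And>s. T s \<le> 1" and k: "k \<ge> 1"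
    and upper: "\<And>n. k \<le> n \<Longrightarrow> \<exists>s\<le>n. P n \<le> construction_value k (T s) s n"
    and L: "\<And>x. 0 \<le> x \<Longrightarrow> x \<le> 1 \<Longrightarrow> 1 + x - (1 - p) * x^k \<le> L" and a: "L < a"
  shows "\<forall>\<^sub>F n in sequentially. P n < a"
proof -
  define e where "e = a - L"
  have e: "e > 0" using a by (simp add: e_def)
  have L1: "1 \<le> L" using L[of 0] k by (simp add: power_0_left)
  obtain N where N: "\<And>m. N \<le> m \<Longrightarrow> T m < p + e / 2"
    using order_tendstoD(2)[OF T(1), of "p + e / 2"] e unfolding eventually_sequentially by auto
  have small: "\<forall>\<^sub>F n in sequentially. c / real n < e / 2" for c :: real
    using order_tendstoD(2)[OF lim_const_over_n[of c], of "e / 2"] e by simp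
  show ?thesis
    using eventually_ge_at_top[of k] small[of "real N"] small[of "real k * real k"]
  proof eventually_elim
    case (elim n)
    then obtain s where s: "s \<le> n" and P: "P n \<le> construction_value k (T s) s n"
      using upper by blast
    define x where "x = real s / real n"
    have x: "0 \<le> x" "x \<le> 1" using s by (auto simp: x_def divide_le_eq_1)
    show ?case
    proof (cases "s < N")
      case True
      have "x \<le> real N / real n" unfolding x_def using True by (simp add: divide_right_mono)
      then show ?thesis
        using P construction_value_le_trivial[OF T(3)[of s], of k s n] elim L1 a unfolding x_def e_def
        by argo
    next
      case False
      have "(T s - p) * x^k \<le> e / 2 * 1"
        using N[of s] False x e by (intro mult_mono) (auto simp: power_le_one)
      moreover have "1 + x - (1 - T s) * x^k = 1 + x - (1 - p) * x^k + (T s - p) * x^k"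
        by (simp add: algebra_simps)
      ultimately show ?thesis
        using P construction_value_le[OF s elim(1) k T(2,3)[of s]] L[OF x] elim a
        unfolding x_def e_def by argo
    qed
  qed
qed

lemma tendsto_extension_density:
  fixes P T :: "nat \<Rightarrow> real"
  assumes T: "T \<longlonglongrightarrow> p" "\<And>s. 0 \<le> T s" "\<And>s. T s \<le> 1" and k: "k \<ge> 2"
    and upper: "\<And>n. k \<le> n \<Longrightarrow> \<exists>s\<le>n. P n \<le> construction_value k (T s) s n"
    and lower: "\<And>s n. s \<le> n \<Longrightarrow> k \<le> n \<Longrightarrow> construction_value k (T s) s n \<le> P n"
  shows "P \<longlonglongrightarrow> extension_density k p"
proof -
  have "p \<le> 1" using T by (intro LIMSEQ_le_const2[OF T(1)]) auto
  then obtain x0 where "0 < x0" "x0 \<le> 1" "1 + x0 - (1 - p) * x0^k = extension_density k p"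
    and max: "\<And>x. 0 \<le> x \<Longrightarrow> x \<le> 1 \<Longrightarrow> 1 + x - (1 - p) * x^k \<le> extension_density k p"
    using extension_density_maximizer[OF k] by blast
  then show ?thesis
    using k by (intro order_tendstoI eventually_gt_of_construction_lower_bound[OF T(1,3) _ lower]
        eventually_lt_of_construction_upper_bound[OF T _ upper max]) auto
qed

section \<open>Lubell densities of forbidden families\<close>

definition hfree :: "'a hypergraph \<Rightarrow> nat \<Rightarrow> nat set set \<Rightarrow> bool" where
  "hfree H n E \<longleftrightarrow> E \<subseteq> Pow {0..<n} \<and> Rset ({0..<n}, E) \<subseteq> Rset H \<and> \<not> hsub H ({0..<n}, E)"

lemma Rset_subset_iff: "Rset (V, E) \<subseteq> R \<longleftrightarrow> (\<forall>F\<in>E. card F \<in> R)"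
  by (auto simp: Rset_def)

lemma finite_hfree: "finite {E. hfree H n E}"
  by (rule finite_subset[of _ "Pow (Pow {0..<n})"]) (auto simp: hfree_def)

lemma pi_n_eq_Max: "pi_n H n = Max (lubell n ` {E. hfree H n E})"
  unfolding pi_n_def hfree_def by (rule arg_cong[where f = Max]) blast

lemma hfree_empty: "snd H \<noteq> {} \<Longrightarrow> hfree H n {}"
  by (auto simp: hfree_def hsub_def Rset_def)

lemma lubell_le_pi_n: "hfree H n E \<Longrightarrow> lubell n E \<le> pi_n H n"
  unfolding pi_n_eq_Max by (intro Max_ge finite_imageI finite_hfree) auto

lemma pi_n_attained:
  assumes "snd H \<noteq> {}"
  obtains E where "hfree H n E" "lubell n E = pi_n H n"
proof -
  have "pi_n H n \<in> lubell n ` {E. hfree H n E}"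
    unfolding pi_n_eq_Max using hfree_empty[OF assms] by (intro Max_in finite_imageI finite_hfree) auto
  then obtain E where "hfree H n E" "pi_n H n = lubell n E" by auto
  then show ?thesis using that by simp
qed

lemma pi_n_nonneg: "snd H \<noteq> {} \<Longrightarrow> 0 \<le> pi_n H n"
  using lubell_le_pi_n[OF hfree_empty] by (simp add: lubell_def)

lemma hsub_mono:
  assumes "hsub H (A, E)" "A \<subseteq> B" "E \<subseteq> E'"
  shows "hsub H (B, E')"
  using assms unfolding hsub_def by fastforce

lemma hsub_trans:
  assumes "hsub H1 H2" "hsub H2 H3"
  shows "hsub H1 H3"
proof -
  obtain f where f: "inj_on f (fst H1)" "f ` fst H1 \<subseteq> fst H2" "\<forall>F\<in>snd H1. f ` F \<in> snd H2"
    using assms(1) unfolding hsub_def by blast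
  obtain g where g: "inj_on g (fst H2)" "g ` fst H2 \<subseteq> fst H3" "\<forall>F\<in>snd H2. g ` F \<in> snd H3"
    using assms(2) unfolding hsub_def by blast
  have "inj_on (g \<circ> f) (fst H1)" using f g by (auto intro: comp_inj_on inj_on_subset)
  moreover have "(g \<circ> f) ` fst H1 \<subseteq> fst H3" using f g by auto
  moreover have "\<forall>F\<in>snd H1. (g \<circ> f) ` F \<in> snd H3" using f(3) g(3) by (metis image_comp)
  ultimately show ?thesis unfolding hsub_def by blast
qed

lemma hsub_image:
  assumes "bij_betw g W W'" "E \<subseteq> Pow W"
  shows "hsub (W', image g ` E) (W, E)"
  unfolding hsub_def
proof (intro exI[of _ "inv_into W g"] conjI ballI)
  show "inj_on (inv_into W g) (fst (W', image g ` E))"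
    using assms(1) by (simp add: bij_betw_def inj_on_inv_into)
  show "inv_into W g ` fst (W', image g ` E) \<subseteq> fst (W, E)"
    using assms(1) by (auto simp: bij_betw_def)
  fix F assume "F \<in> snd (W', image g ` E)"
  then obtain F0 where "F0 \<in> E" "F = g ` F0" by auto
  moreover have "inv_into W g ` g ` F0 = F0"
    using assms \<open>F0 \<in> E\<close> by (intro inv_into_image_cancel) (auto simp: bij_betw_def)
  ultimately show "inv_into W g ` F \<in> snd (W, E)" by simp
qed

lemma lubell_uniform:
  assumes "\<forall>F\<in>E. card F = k"
  shows "lubell n E = real (card E) / real (n choose k)"
  using assms unfolding lubell_def by simp

lemma card_uniform_le:
  assumes "finite W" "E \<subseteq> Pow W" "\<forall>F\<in>E. card F = k"
  shows "card E \<le> card W choose k"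
proof -
  have "card E \<le> card {B. B \<subseteq> W \<and> card B = k}"
    using assms by (intro card_mono) auto
  then show ?thesis using n_subsets[OF assms(1)] by simp
qed

lemma card_eq_lubell_mult:
  assumes "E \<subseteq> Pow {0..<n}" "\<forall>F\<in>E. card F = k"
  shows "real (card E) = lubell n E * real (n choose k)"
proof (cases "n choose k = 0")
  case True
  then have "card E = 0" using card_uniform_le[of "{0..<n}" E k] assms by (simp del: binomial_eq_0_iff)
  with True show ?thesis by simp
next
  case False
  then show ?thesis by (simp add: lubell_uniform[OF assms(2)] del: binomial_eq_0_iff)
qed

lemma card_k_subsets_not_within:
  assumes "finite A" "S \<subseteq> A"
  shows "card ({F. F \<subseteq> A \<and> card F = k} - {F. F \<subseteq> S \<and> card F = k})
           = (card A choose k) - (card S choose k)"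
proof -
  have "finite {F. F \<subseteq> A \<and> card F = k}" using assms(1) by auto
  moreover have "{F. F \<subseteq> S \<and> card F = k} \<subseteq> {F. F \<subseteq> A \<and> card F = k}" using assms(2) by auto
  ultimately show ?thesis
    using assms by (simp add: card_Diff_subset finite_subset n_subsets)
qed

lemma singleton_edges_eq:
  assumes "E \<subseteq> Pow V"
  shows "{F \<in> E. card F = 1} = (\<lambda>v. {v}) ` {v \<in> V. {v} \<in> E}"
proof
  show "{F \<in> E. card F = 1} \<subseteq> (\<lambda>v. {v}) ` {v \<in> V. {v} \<in> E}"
  proof
    fix F assume "F \<in> {F \<in> E. card F = 1}"
    then obtain v where "F = {v}" "F \<in> E" by (auto simp: card_1_singleton_iff)
    moreover from this have "v \<in> V" using assms by auto
    ultimately show "F \<in> (\<lambda>v. {v}) ` {v \<in> V. {v} \<in> E}" by auto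
  qed
qed auto

lemma card_uniform_le_inside:
  assumes "finite A" "S \<subseteq> A" "K \<subseteq> Pow A" "\<forall>F\<in>K. card F = k"
  shows "card K \<le> card {F \<in> K. F \<subseteq> S} + ((card A choose k) - (card S choose k))"
proof -
  have "K - {F \<in> K. F \<subseteq> S} \<subseteq> {F. F \<subseteq> A \<and> card F = k} - {F. F \<subseteq> S \<and> card F = k}"
    using assms by auto
  then have "card (K - {F \<in> K. F \<subseteq> S}) \<le> (card A choose k) - (card S choose k)"
    using card_mono[OF _ \<open>K - _ \<subseteq> _\<close>] card_k_subsets_not_within[OF assms(1,2)] assms(1) by simp
  moreover have "card K \<le> card {F \<in> K. F \<subseteq> S} + card (K - {F \<in> K. F \<subseteq> S})"
  proof -
    have "K = {F \<in> K. F \<subseteq> S} \<union> (K - {F \<in> K. F \<subseteq> S})" by auto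
    then show ?thesis by (metis card_Un_le)
  qed
  ultimately show ?thesis by linarith
qed

lemma sum_card_edges_avoiding:
  assumes "E \<subseteq> Pow {0..<m}" "\<forall>F\<in>E. card F = k"
  shows "(\<Sum>v\<in>{0..<m}. card {F\<in>E. v \<notin> F}) = card E * (m - k)"
proof -
  have fin: "finite E" using assms(1) by (rule finite_subset) auto
  have "(\<Sum>v\<in>{0..<m}. card {F\<in>E. v \<notin> F}) = (\<Sum>v\<in>{0..<m}. \<Sum>F\<in>E. if v \<notin> F then 1 else 0)"
    using fin by (simp add: sum.inter_filter[symmetric])
  also have "\<dots> = (\<Sum>F\<in>E. card ({0..<m} - F))"
    by (subst sum.swap) (simp add: sum.inter_filter[symmetric] set_diff_eq)
  also have "\<dots> = (\<Sum>F\<in>E. m - k)"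
    using assms by (intro sum.cong refl) (subst card_Diff_subset, auto intro: finite_subset)
  finally show ?thesis by simp
qed

locale uniform_pattern =
  fixes G :: "'a hypergraph" and k :: nat
  assumes Rset_G: "Rset G = {k}"
begin

lemma edges_nonempty: "snd G \<noteq> {}"
  using Rset_G unfolding Rset_def by auto

lemma hfree_iff:
  "hfree G n E \<longleftrightarrow> E \<subseteq> Pow {0..<n} \<and> (\<forall>F\<in>E. card F = k) \<and> \<not> hsub G ({0..<n}, E)"
  unfolding hfree_def Rset_G Rset_subset_iff by auto

lemma extremal_family:
  obtains E where "hfree G n E" "real (card E) = pi_n G n * real (n choose k)"
proof -
  obtain E where "hfree G n E" "lubell n E = pi_n G n"
    using pi_n_attained[OF edges_nonempty] .
  then show ?thesis using that card_eq_lubell_mult[of E n k] unfolding hfree_iff by auto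
qed

lemma pi_n_le_1: "pi_n G n \<le> 1"
proof -
  obtain E where E: "hfree G n E" "lubell n E = pi_n G n"
    using pi_n_attained[OF edges_nonempty] .
  then have "card E \<le> n choose k" "lubell n E = real (card E) / real (n choose k)"
    using card_uniform_le[of "{0..<n}" E k] lubell_uniform[of E k n] unfolding hfree_iff by auto
  then show ?thesis using E(2) by (auto simp: divide_le_eq_1)
qed

lemma card_le_pi_n:
  assumes "finite W" "E \<subseteq> Pow W" "\<forall>F\<in>E. card F = k" "\<not> hsub G (W, E)"
  shows "real (card E) \<le> pi_n G (card W) * real (card W choose k)"
proof -
  define s where "s = card W"
  obtain g where g: "bij_betw g W {0..<s}"
    using ex_bij_betw_finite_nat[OF assms(1)] unfolding s_def by blast
  define E' where "E' = image g ` E"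
  have inj_E: "inj_on (image g) E"
    using inj_on_image_Pow[of g W] g assms(2) unfolding bij_betw_def by (meson inj_on_subset)
  have E'_pow: "E' \<subseteq> Pow {0..<s}" using g assms(2) unfolding E'_def bij_betw_def by auto
  have E'_card: "\<forall>F\<in>E'. card F = k"
    using g assms(2,3) unfolding E'_def bij_betw_def by (auto simp: card_image inj_on_subset)
  have "\<not> hsub G ({0..<s}, E')"
    using hsub_trans[OF _ hsub_image[OF g assms(2)]] assms(4) unfolding E'_def by blast
  then have "lubell s E' \<le> pi_n G s"
    using E'_pow E'_card by (intro lubell_le_pi_n) (simp add: hfree_iff)
  then have "real (card E') \<le> pi_n G s * real (s choose k)"
    using card_eq_lubell_mult[OF E'_pow E'_card] by (simp add: mult_right_mono)
  moreover have "card E' = card E" unfolding E'_def using inj_E by (simp add: card_image)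
  ultimately show ?thesis unfolding s_def by simp
qed

text \<open>Averaging over the \<open>n + 1\<close> vertex-deleted subfamilies of an extremal family on \<open>n + 1\<close> vertices.\<close>
lemma pi_n_Suc_le:
  assumes "k \<le> n"
  shows "pi_n G (Suc n) \<le> pi_n G n"
proof -
  obtain E where E: "hfree G (Suc n) E" "real (card E) = pi_n G (Suc n) * real (Suc n choose k)"
    by (rule extremal_family)
  then have E_pow: "E \<subseteq> Pow {0..<Suc n}" and E_card: "\<forall>F\<in>E. card F = k"
    and E_free: "\<not> hsub G ({0..<Suc n}, E)" unfolding hfree_iff by auto
  have avoid: "real (card {F\<in>E. v \<notin> F}) \<le> pi_n G n * real (n choose k)"
    if "v \<in> {0..<Suc n}" for v
  proof -
    have "\<not> hsub G ({0..<Suc n} - {v}, {F\<in>E. v \<notin> F})"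
      using E_free hsub_mono[of G "{0..<Suc n} - {v}" "{F\<in>E. v \<notin> F}" "{0..<Suc n}" E] by auto
    then show ?thesis
      using card_le_pi_n[of "{0..<Suc n} - {v}" "{F\<in>E. v \<notin> F}"] that E_pow E_card by auto
  qed
  have "real (card E * (Suc n - k)) = (\<Sum>v\<in>{0..<Suc n}. real (card {F\<in>E. v \<notin> F}))"
    unfolding sum_card_edges_avoiding[OF E_pow E_card, symmetric] by simp
  also have "\<dots> \<le> (\<Sum>v\<in>{0..<Suc n}. pi_n G n * real (n choose k))"
    by (rule sum_mono) (rule avoid)
  also have "\<dots> = pi_n G n * real (Suc n choose k) * real (Suc n - k)"
    using binomial_absorb_comp[of "Suc n" k] by (simp add: algebra_simps flip: of_nat_mult)
  finally have "real (card E) \<le> pi_n G n * real (Suc n choose k)"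
    using assms by (simp add: mult_le_cancel_right)
  then show ?thesis using E(2) assms by (simp add: mult_le_cancel_right)
qed

lemma pi_n_tendsto: "pi_n G \<longlonglongrightarrow> pi_dens G"
proof -
  have "decseq (\<lambda>n. pi_n G (n + k))"
    by (rule decseq_SucI) (simp add: pi_n_Suc_le)
  then have "monoseq (\<lambda>n. pi_n G (n + k))"
    by (simp add: monoseq_iff)
  moreover have "Bseq (\<lambda>n. pi_n G (n + k))"
    using pi_n_nonneg[OF edges_nonempty] pi_n_le_1 by (intro BseqI'[of _ 1]) auto
  ultimately have "convergent (\<lambda>n. pi_n G (n + k))"
    by (intro Bseq_monoseq_convergent)
  then have "convergent (pi_n G)"
    unfolding convergent_def using LIMSEQ_offset[of "pi_n G" k] by blast
  then show ?thesis unfolding pi_dens_def by (rule convergent_LIMSEQ_iff[THEN iffD1])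
qed

end

section \<open>Patterns all of whose vertices carry singleton edges\<close>

lemma lubell_singletons_union_uniform:
  assumes "k \<noteq> 1" "finite S" "finite K" "\<forall>F\<in>K. card F = k"
  shows "lubell n ((\<lambda>v. {v}) ` S \<union> K) = real (card S) / real n + real (card K) / real (n choose k)"
proof -
  have "lubell n ((\<lambda>v. {v}) ` S \<union> K) = lubell n ((\<lambda>v. {v}) ` S) + lubell n K"
    unfolding lubell_def using assms by (intro sum.union_disjoint) auto
  moreover have "lubell n ((\<lambda>v. {v}) ` S) = real (card S) / real n"
    using lubell_uniform[of "(\<lambda>v. {v}) ` S" 1 n] by (simp add: card_image)
  ultimately show ?thesis using lubell_uniform[OF assms(4)] by simp
qed

lemma construction_value_eq:
  assumes "n choose k > 0"
  shows "construction_value k t s n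
    = real s / real n + (t * real (s choose k) + (real (n choose k) - real (s choose k))) / real (n choose k)"
  using assms unfolding construction_value_def by (simp add: field_simps)

locale singleton_extension =
  fixes H :: "'a hypergraph" and k :: nat
  assumes k2: "k \<ge> 2" and hypergraph: "hypergraph H" and Rset_H: "Rset H = {1, k}"
    and singleton_edges: "{F \<in> snd H. card F = 1} = (\<lambda>v. {v}) ` fst H"
begin

sublocale kpart: uniform_pattern "kpart k H" k
proof
  have "k \<in> card ` snd H" using Rset_H unfolding Rset_def by auto
  then show "Rset (kpart k H) = {k}" unfolding Rset_def kpart_def by auto
qed

lemma edge_cases:
  assumes "F \<in> snd H"
  obtains v where "v \<in> fst H" "F = {v}" | "card F = k"
  using assms Rset_H singleton_edges unfolding Rset_def by blast

lemma hsub_iff_hsub_kpart: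
  assumes "{F \<in> E. card F = 1} = (\<lambda>v. {v}) ` S" "S \<subseteq> V"
  shows "hsub H (V, E) \<longleftrightarrow> hsub (kpart k H) (S, {F \<in> E. card F = k \<and> F \<subseteq> S})"
proof
  assume "hsub H (V, E)"
  then obtain f where f: "inj_on f (fst H)" "\<forall>F\<in>snd H. f ` F \<in> E" unfolding hsub_def by auto
  have "f ` fst H \<subseteq> S"
  proof
    fix y assume "y \<in> f ` fst H"
    then obtain v where "v \<in> fst H" "y = f v" by auto
    then have "{y} \<in> {F \<in> E. card F = 1}" using f(2) singleton_edges by force
    then show "y \<in> S" using assms(1) by auto
  qed
  moreover have "f ` F \<in> {F \<in> E. card F = k \<and> F \<subseteq> S}" if "F \<in> snd (kpart k H)" for F
  proof -
    have "F \<in> snd H" "F \<subseteq> fst H" "card F = k"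
      using that hypergraph unfolding kpart_def hypergraph_def by auto
    moreover from this(2) have "f ` F \<subseteq> S" using \<open>f ` fst H \<subseteq> S\<close> by blast
    ultimately show ?thesis using card_image[OF inj_on_subset[OF f(1)]] f(2) by auto
  qed
  ultimately show "hsub (kpart k H) (S, {F \<in> E. card F = k \<and> F \<subseteq> S})"
    unfolding hsub_def using f(1) by (intro exI[of _ f]) (auto simp: kpart_def)
next
  assume "hsub (kpart k H) (S, {F \<in> E. card F = k \<and> F \<subseteq> S})"
  then obtain f where f: "inj_on f (fst H)" "f ` fst H \<subseteq> S"
    "\<forall>F\<in>snd (kpart k H). f ` F \<in> {F \<in> E. card F = k \<and> F \<subseteq> S}"
    unfolding hsub_def kpart_def by auto
  have "f ` F \<in> E" if "F \<in> snd H" for F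
  proof (cases rule: edge_cases[OF that])
    case (1 v)
    then show ?thesis using f(2) assms(1) by auto
  next
    case 2
    then show ?thesis using f(3) that unfolding kpart_def by auto
  qed
  then show "hsub H (V, E)" unfolding hsub_def using f(1,2) assms(2) by (intro exI[of _ f]) auto
qed

lemma edges_nonempty: "snd H \<noteq> {}"
  using Rset_H unfolding Rset_def by auto

lemma pi_n_le_construction_value:
  assumes "k \<le> n"
  shows "\<exists>s\<le>n. pi_n H n \<le> construction_value k (pi_n (kpart k H) s) s n"
proof -
  obtain E where E: "hfree H n E" "lubell n E = pi_n H n"
    using pi_n_attained[OF edges_nonempty] .
  define S where "S = {v\<in>{0..<n}. {v} \<in> E}"
  define K where "K = {F\<in>E. card F = k}"
  define K_in where "K_in = {F\<in>K. F \<subseteq> S}"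
  have E_pow: "E \<subseteq> Pow {0..<n}" and E_free: "\<not> hsub H ({0..<n}, E)"
    and E_card: "\<forall>F\<in>E. card F = 1 \<or> card F = k"
    using E(1) unfolding hfree_def Rset_H Rset_subset_iff by auto
  have S_sub: "S \<subseteq> {0..<n}" by (auto simp: S_def)
  have singletons: "{F \<in> E. card F = 1} = (\<lambda>v. {v}) ` S"
    unfolding S_def by (rule singleton_edges_eq[OF E_pow])
  have "E = (\<lambda>v. {v}) ` S \<union> K"
    using E_card singletons unfolding K_def by blast
  moreover have "finite S" using S_sub finite_subset by blast
  moreover have "finite K" using E_pow unfolding K_def by (auto intro: finite_subset)
  moreover have K_card: "\<forall>F\<in>K. card F = k" unfolding K_def by simp
  ultimately have pi_n_eq: "pi_n H n = real (card S) / real n + real (card K) / real (n choose k)"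
    using E(2) k2 lubell_singletons_union_uniform[of k S K n] by simp
  have "real (card K_in) \<le> pi_n (kpart k H) (card S) * real (card S choose k)"
    using E_free hsub_iff_hsub_kpart[OF singletons S_sub] S_sub E_pow
    by (intro kpart.card_le_pi_n) (auto simp: K_in_def K_def kpart_def finite_subset)
  moreover have "card K \<le> card K_in + ((n choose k) - (card S choose k))"
  proof -
    have "K \<subseteq> Pow {0..<n}" using E_pow unfolding K_def by blast
    then show ?thesis using card_uniform_le_inside[OF _ S_sub _ K_card] unfolding K_in_def by simp
  qed
  moreover have "card S choose k \<le> n choose k"
    using card_mono[OF _ S_sub] by (simp add: binomial_right_mono)
  ultimately have "pi_n H n \<le> construction_value k (pi_n (kpart k H) (card S)) (card S) n"
    using pi_n_eq assms construction_value_eq[of n k]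
    by (simp add: divide_right_mono of_nat_diff)
  then show ?thesis using card_mono[OF _ S_sub] by auto
qed

lemma construction_value_le_pi_n:
  assumes "s \<le> n" "k \<le> n"
  shows "construction_value k (pi_n (kpart k H) s) s n \<le> pi_n H n"
proof -
  obtain Es where Es: "hfree (kpart k H) s Es"
    "real (card Es) = pi_n (kpart k H) s * real (s choose k)"
    by (rule kpart.extremal_family)
  then have Es_pow: "Es \<subseteq> Pow {0..<s}" and Es_card: "\<forall>F\<in>Es. card F = k"
    and Es_free: "\<not> hsub (kpart k H) ({0..<s}, Es)"
    unfolding kpart.hfree_iff by auto
  define Out where "Out = {F. F \<subseteq> {0..<n} \<and> card F = k} - {F. F \<subseteq> {0..<s} \<and> card F = k}"
  define E where "E = (\<lambda>v. {v}) ` {0..<s} \<union> (Es \<union> Out)"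
  have sub: "{0..<s} \<subseteq> {0..<n}" using assms by auto
  have singletons: "{F \<in> E. card F = 1} = (\<lambda>v. {v}) ` {0..<s}"
    using Es_card k2 by (auto simp: E_def Out_def)
  have inside: "{F \<in> E. card F = k \<and> F \<subseteq> {0..<s}} = Es"
    using Es_card Es_pow k2 by (auto simp: E_def Out_def)
  have "Es \<subseteq> Pow {0..<n}" using Es_pow sub by blast
  then have "E \<subseteq> Pow {0..<n}" using sub by (auto simp: E_def Out_def)
  moreover have "\<forall>F\<in>E. card F \<in> {1, k}" using Es_card by (auto simp: E_def Out_def)
  ultimately have "hfree H n E"
    unfolding hfree_def Rset_H Rset_subset_iff hsub_iff_hsub_kpart[OF singletons sub] inside
    using Es_free by blast
  then have "lubell n E \<le> pi_n H n" by (rule lubell_le_pi_n)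
  moreover have "finite Es" using Es_pow by (auto intro: finite_subset)
  moreover have "finite Out" unfolding Out_def by auto
  moreover have "lubell n E = real s / real n + real (card (Es \<union> Out)) / real (n choose k)"
    unfolding E_def using k2 Es_card \<open>finite Es\<close> \<open>finite Out\<close>
    by (subst lubell_singletons_union_uniform[of k]) (auto simp: Out_def)
  moreover have "card (Es \<union> Out) = card Es + ((n choose k) - (s choose k))"
    using card_Un_disjoint[OF \<open>finite Es\<close> \<open>finite Out\<close>] card_k_subsets_not_within[OF _ sub, of k]
      Es_pow Es_card by (auto simp: Out_def)
  moreover have "s choose k \<le> n choose k" using assms(1) by (rule binomial_right_mono)
  ultimately show ?thesis
    using Es(2) assms construction_value_eq[of n k] by (simp add: of_nat_diff add_diff_eq)
qed

end

theorem mainTheorem6: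
  fixes H :: "'a hypergraph" and k :: nat
  assumes "k \<ge> 2"
    and "hypergraph H"
    and "Rset H = {1, k}"
    and "{F \<in> snd H. card F = 1} = (\<lambda>v. {v}) ` fst H"
  shows "pi_n H \<longlonglongrightarrow>
    (if pi_dens (kpart k H) \<ge> 1 - 1 / real k
     then 1 + pi_dens (kpart k H)
     else 1 + (1 / (real k * (1 - pi_dens (kpart k H)))) powr (1 / (real k - 1))
              * (1 - 1 / real k))"
proof -
  interpret singleton_extension H k
    using assms by unfold_locales
  have "pi_n H \<longlonglongrightarrow> extension_density k (pi_dens (kpart k H))"
    by (intro tendsto_extension_density[OF kpart.pi_n_tendsto] pi_n_nonneg[OF kpart.edges_nonempty]
        kpart.pi_n_le_1 pi_n_le_construction_value construction_value_le_pi_n assms(1))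
  then show ?thesis unfolding extension_density_def .
qed

end
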